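(* Let $H$ be a graph without isolated vertices, let $x$ and $y$ be adjacent vertices of degree 2 in $H$, and let $x'$ and $y'$ be the vertices such that $N_H(x)\setminus\{y\}=\{x'\}$ and $N_H(y)\setminus\{x\}=\{y'\}$. If the sets $N_H(x')\setminus\{x,y\}$ and $N_H(y')\setminus\{x,y\}$ are nonempty, then the 2-subdivision graph $S_2(H)$ is a DPDP-graph but not a minimal DPDP-graph.
   Context: Graphs are finite and may have multiple edges and loops. A leaf is a vertex of degree one. A set $D\subseteq V(G)$ is dominating if every vertex outside $D$ has a neighbor in $D$; $P$ is paired-dominating if it is dominating and the subgraph induced by $P$ has a perfect matching. A DPDP-graph is a graph $G$ admitting disjoint sets $D,P$ with $V(G)=D\cup P$, $D$ dominating and $P$ paired-dominating; a minimal DPDP-graph is a DPDP-graph no proper spanning subgraph of which is a DPDP-graph. 2-subdivision graph: for a graph $H$ with no isolated vertex, set of leaves $L_H$, and $\alpha:L_H\to\mathbb{N}=\{1,2,\dots\}$, $S_2(H)$ has vertex set $(V_H\setminus L_H)\cup\{(v,i): v\in L_H, 1\le i\le \alpha(v)\}$ together with two new vertices for each edge $e$ of $H$ ($u_e,v_e$ if $e$ joins $u\ne v$; $v_e^1,v_e^2$ if $e$ is a loop at $v$). Its edges are: the edge joining the two new vertices of each $e$; for $v\in V_H\setminus L_H$, $vv_e$ for each non-loop edge $e$ at $v$ and $vv_e^1,vv_e^2$ for each loop $e$ at $v$; for $v\in L_H$ with incident edge $e$, the edges $v_e(v,i)$, $1\le i\le\alpha(v)$. The claim holds for any choice of $\alpha$.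 *)

theory Defs
  imports Main
begin

text \<open>A multigraph is given by a vertex set V, an edge set Ed and an incidence map
  ends: each edge has one end (a loop) or two distinct ends.\<close>

definition multigraph :: "'v set \<Rightarrow> 'e set \<Rightarrow> ('e \<Rightarrow> 'v set) \<Rightarrow> bool" where
  "multigraph V Ed ends \<longleftrightarrow> finite V \<and> finite Ed \<and>
     (\<forall>e\<in>Ed. ends e \<subseteq> V \<and> (card (ends e) = 1 \<or> card (ends e) = 2))"

text \<open>Degree: loops count twice.\<close>
definition mdeg :: "'e set \<Rightarrow> ('e \<Rightarrow> 'v set) \<Rightarrow> 'v \<Rightarrow> nat" where
  "mdeg Ed ends v = card {e\<in>Ed. v \<in> ends e \<and> card (ends e) = 2}
                    + 2 * card {e\<in>Ed. ends e = {v}}"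

definition mnbhd :: "'e set \<Rightarrow> ('e \<Rightarrow> 'v set) \<Rightarrow> 'v \<Rightarrow> 'v set" where
  "mnbhd Ed ends v = {u. \<exists>e\<in>Ed. ends e = {u, v}}"

definition mleaves :: "'v set \<Rightarrow> 'e set \<Rightarrow> ('e \<Rightarrow> 'v set) \<Rightarrow> 'v set" where
  "mleaves V Ed ends = {v\<in>V. mdeg Ed ends v = 1}"

text \<open>Vertices of S_2(H): Orig v (v a non-leaf of H), Leafc v i (the copies (v,i) of a
  leaf v), Sub e v (the new vertex v_e of a non-loop edge e at v), LoopSub e i
  (the new vertices v_e^1, v_e^2 of a loop e).\<close>

datatype ('v, 'e) s2v = Orig 'v | Leafc 'v nat | Sub 'e 'v | LoopSub 'e nat

definition s2_verts :: "'v set \<Rightarrow> 'e set \<Rightarrow> ('e \<Rightarrow> 'v set) \<Rightarrow> ('v \<Rightarrow> nat) \<Rightarrow> ('v, 'e) s2v set" where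
  "s2_verts V Ed ends \<alpha> =
     Orig ` (V - mleaves V Ed ends)
   \<union> {Leafc v i | v i. v \<in> mleaves V Ed ends \<and> 1 \<le> i \<and> i \<le> \<alpha> v}
   \<union> {Sub e v | e v. e \<in> Ed \<and> card (ends e) = 2 \<and> v \<in> ends e}
   \<union> {LoopSub e i | e i. e \<in> Ed \<and> card (ends e) = 1 \<and> i \<in> {1, 2}}"

definition s2_edges :: "'v set \<Rightarrow> 'e set \<Rightarrow> ('e \<Rightarrow> 'v set) \<Rightarrow> ('v \<Rightarrow> nat) \<Rightarrow> ('v, 'e) s2v set set" where
  "s2_edges V Ed ends \<alpha> =
     {{Sub e u, Sub e v} | e u v. e \<in> Ed \<and> ends e = {u, v} \<and> u \<noteq> v}
   \<union> {{LoopSub e 1, LoopSub e 2} | e v. e \<in> Ed \<and> ends e = {v}}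
   \<union> {{Orig v, Sub e v} | e v. e \<in> Ed \<and> v \<in> ends e \<and> card (ends e) = 2
                                 \<and> v \<in> V - mleaves V Ed ends}
   \<union> {{Orig v, LoopSub e i} | e v i. e \<in> Ed \<and> ends e = {v} \<and> v \<in> V - mleaves V Ed ends
                                 \<and> i \<in> {1, 2}}
   \<union> {{Sub e v, Leafc v i} | e v i. e \<in> Ed \<and> v \<in> mleaves V Ed ends \<and> v \<in> ends e
                                 \<and> 1 \<le> i \<and> i \<le> \<alpha> v}"

definition dominating :: "'a set \<Rightarrow> 'a set set \<Rightarrow> 'a set \<Rightarrow> bool" where
  "dominating V E D \<longleftrightarrow> D \<subseteq> V \<and> (\<forall>v\<in>V - D. \<exists>u\<in>D. {u, v} \<in> E)"

definition induced_perfect_matching :: "'a set set \<Rightarrow> 'a set \<Rightarrow> bool" where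
  "induced_perfect_matching E P \<longleftrightarrow>
     (\<exists>M\<subseteq>E. (\<forall>m\<in>M. m \<subseteq> P) \<and> (\<forall>m\<in>M. \<forall>m'\<in>M. m \<noteq> m' \<longrightarrow> m \<inter> m' = {}) \<and> \<Union>M = P)"

definition paired_dominating :: "'a set \<Rightarrow> 'a set set \<Rightarrow> 'a set \<Rightarrow> bool" where
  "paired_dominating V E P \<longleftrightarrow> dominating V E P \<and> induced_perfect_matching E P"

definition dpdp :: "'a set \<Rightarrow> 'a set set \<Rightarrow> bool" where
  "dpdp V E \<longleftrightarrow> (\<exists>D P. D \<inter> P = {} \<and> D \<union> P = V \<and> dominating V E D \<and> paired_dominating V E P)"

definition minimal_dpdp :: "'a set \<Rightarrow> 'a set set \<Rightarrow> bool" where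
  "minimal_dpdp V E \<longleftrightarrow> dpdp V E \<and> \<not> (\<exists>E'. E' \<subset> E \<and> dpdp V E')"

end

theory Submission
  imports Defs
begin

(* Let e1 = x'x, e2 = xy and e3 = yy'; since x and y have degree 2, these are all the edges at x
  and y. Put x, y and all subdivision vertices except x'_e1, x_e2, y_e2, y'_e3 into P, and the
  remaining vertices into D. P is perfectly matched by x x_e1, y y_e3 and the edges u_e v_e for
  e other than e1, e2, e3. Every vertex w other than x, y lies on an edge of H avoiding x and y
  (for w = x', y' by the hypothesis on their neighbourhoods, which also makes them non-leaves),
  and the new vertices of that edge, which lie in P, give w and its leaf copies a P-neighbour.
  Neither D nor P needs the edge x_e2 y_e2 to dominate, so deleting it leaves a DPDP-graph. *)

lemma multigraph_non_link_is_loop: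
  "multigraph V Ed ends \<Longrightarrow> e \<in> Ed \<Longrightarrow> v \<in> ends e \<Longrightarrow> card (ends e) \<noteq> 2 \<Longrightarrow> ends e = {v}"
  unfolding multigraph_def by (metis card_1_singletonE singletonD)

lemma mdeg_ge_2_if_loop:
  assumes "finite Ed" "e \<in> Ed" "ends e = {v}"
  shows "2 \<le> mdeg Ed ends v"
proof -
  have "card {g \<in> Ed. ends g = {v}} \<noteq> 0" using assms by auto
  then show ?thesis by (simp add: mdeg_def)
qed

lemma mdeg_ge_2_if_two_edges:
  assumes H: "multigraph V Ed ends" and "e \<in> Ed" "f \<in> Ed" "e \<noteq> f" "v \<in> ends e" "v \<in> ends f"
  shows "2 \<le> mdeg Ed ends v"
proof (cases "card (ends e) = 2 \<and> card (ends f) = 2")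
  case True
  have fin: "finite Ed" using H by (simp add: multigraph_def)
  then have "card {e, f} \<le> card {g \<in> Ed. v \<in> ends g \<and> card (ends g) = 2}"
    by (intro card_mono) (use True assms in auto)
  then show ?thesis using \<open>e \<noteq> f\<close> by (simp add: mdeg_def)
next
  case False
  then show ?thesis
    using assms multigraph_non_link_is_loop[OF H] mdeg_ge_2_if_loop by (metis multigraph_def)
qed

lemma mdeg_pos_imp_edge: "0 < mdeg Ed ends v \<Longrightarrow> \<exists>e\<in>Ed. v \<in> ends e"
  unfolding mdeg_def by (auto dest!: card_gt_0_iff[THEN iffD1])

lemma edge_at_leaf_is_link:
  assumes H: "multigraph V Ed ends" and "v \<in> mleaves V Ed ends" "e \<in> Ed" "v \<in> ends e"
  shows "card (ends e) = 2"
  using assms multigraph_non_link_is_loop[OF H] mdeg_ge_2_if_loop[of Ed e ends v]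
  by (auto simp: mleaves_def multigraph_def)

lemma mdeg_eq_2_incident_edges:
  assumes H: "multigraph V Ed ends" and deg: "mdeg Ed ends v = 2"
    and e: "e \<in> Ed" "ends e = {a, v}" and f: "f \<in> Ed" "ends f = {b, v}" and "a \<noteq> b"
  shows "a \<noteq> v" "b \<noteq> v" "{g \<in> Ed. v \<in> ends g} = {e, f}"
proof -
  let ?L = "{g \<in> Ed. v \<in> ends g \<and> card (ends g) = 2}" and ?O = "{g \<in> Ed. ends g = {v}}"
  have fin: "finite ?L" "finite ?O" using H by (auto simp: multigraph_def)
  have "?O = {}"
  proof (rule ccontr)
    assume "?O \<noteq> {}"
    moreover have "?L \<noteq> {}"
    proof (cases "a = v")
      case True
      then have "f \<in> ?L" using f \<open>a \<noteq> b\<close> by auto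
      then show ?thesis by blast
    next
      case False
      then have "e \<in> ?L" using e by auto
      then show ?thesis by blast
    qed
    ultimately have "card ?O \<noteq> 0" "card ?L \<noteq> 0" using fin by simp_all
    then have "3 \<le> mdeg Ed ends v" unfolding mdeg_def by linarith
    then show False using deg by simp
  qed
  then show av: "a \<noteq> v" and bv: "b \<noteq> v" using e f by auto
  have "{e, f} \<subseteq> ?L" using e f av bv by auto
  moreover have "card ?L = 2" using deg \<open>?O = {}\<close> by (simp add: mdeg_def)
  moreover have "e \<noteq> f"
  proof
    assume "e = f"
    then have "a \<in> {b, v}" using e f by simp
    then show False using av \<open>a \<noteq> b\<close> by simp
  qed
  then have "card {e, f} = 2" by simp
  ultimately have "?L = {e, f}" using fin by (metis card_subset_eq)
  moreover have "g \<in> ?L" if "g \<in> Ed" "v \<in> ends g" for g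
    using that \<open>?O = {}\<close> multigraph_non_link_is_loop[OF H] by blast
  ultimately show "{g \<in> Ed. v \<in> ends g} = {e, f}" using e f by auto
qed

definition new_verts_at :: "('e \<Rightarrow> 'v set) \<Rightarrow> 'e \<Rightarrow> 'v \<Rightarrow> ('v, 'e) s2v set" where
  "new_verts_at ends e v = (if card (ends e) = 2 then {Sub e v} else {LoopSub e 1, LoopSub e 2})"

definition new_verts :: "('e \<Rightarrow> 'v set) \<Rightarrow> 'e \<Rightarrow> ('v, 'e) s2v set" where
  "new_verts ends e = (\<Union>v\<in>ends e. new_verts_at ends e v)"

definition leaf_copies :: "'v set \<Rightarrow> 'e set \<Rightarrow> ('e \<Rightarrow> 'v set) \<Rightarrow> ('v \<Rightarrow> nat) \<Rightarrow> ('v, 'e) s2v set" where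
  "leaf_copies V Ed ends \<alpha> = {Leafc v i | v i. v \<in> mleaves V Ed ends \<and> 1 \<le> i \<and> i \<le> \<alpha> v}"

lemma new_verts_at_ne_empty: "new_verts_at ends e v \<noteq> {}"
  by (simp add: new_verts_at_def)

lemma new_verts_at_subset: "v \<in> ends e \<Longrightarrow> new_verts_at ends e v \<subseteq> new_verts ends e"
  unfolding new_verts_def by blast

lemma new_verts_at_link [simp]: "card (ends e) = 2 \<Longrightarrow> new_verts_at ends e v = {Sub e v}"
  by (simp add: new_verts_at_def)

lemma new_verts_ne_empty: "ends e \<noteq> {} \<Longrightarrow> new_verts ends e \<noteq> {}"
  by (auto simp: new_verts_def new_verts_at_def)

lemma new_verts_link: "ends e = {u, v} \<Longrightarrow> u \<noteq> v \<Longrightarrow> new_verts ends e = {Sub e u, Sub e v}"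
  by (auto simp: new_verts_def new_verts_at_def)

lemma Sub_in_new_verts_iff [simp]:
  "Sub e' v \<in> new_verts ends e \<longleftrightarrow> e' = e \<and> card (ends e) = 2 \<and> v \<in> ends e"
  by (auto simp: new_verts_def new_verts_at_def split: if_splits)

lemma LoopSub_in_new_verts_iff [simp]:
  "LoopSub e' i \<in> new_verts ends e \<longleftrightarrow> e' = e \<and> card (ends e) \<noteq> 2 \<and> ends e \<noteq> {} \<and> i \<in> {1, 2}"
  by (auto simp: new_verts_def new_verts_at_def split: if_splits)

lemma Orig_notin_new_verts [simp]: "Orig v \<notin> new_verts ends e"
  by (auto simp: new_verts_def new_verts_at_def split: if_splits)

lemma Leafc_notin_new_verts [simp]: "Leafc v i \<notin> new_verts ends e"
  by (auto simp: new_verts_def new_verts_at_def split: if_splits)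

lemma new_verts_disjoint: "e \<noteq> e' \<Longrightarrow> new_verts ends e \<inter> new_verts ends e' = {}"
  by (auto simp: new_verts_def new_verts_at_def split: if_splits)

lemma pairwise_disjnt_new_verts: "pairwise disjnt (new_verts ends ` F)"
proof (rule pairwiseI)
  fix A B assume "A \<in> new_verts ends ` F" "B \<in> new_verts ends ` F" "A \<noteq> B"
  then obtain a b where "A = new_verts ends a" "B = new_verts ends b" "a \<noteq> b" by auto
  then show "disjnt A B" using new_verts_disjoint by (simp add: disjnt_def)
qed

lemma s2_verts_eq:
  assumes "multigraph V Ed ends"
  shows "s2_verts V Ed ends \<alpha> =
    Orig ` (V - mleaves V Ed ends) \<union> leaf_copies V Ed ends \<alpha> \<union> \<Union>(new_verts ends ` Ed)"
proof (rule set_eqI)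
  fix z :: "('a, 'b) s2v"
  have "card (ends e) = 1 \<longleftrightarrow> card (ends e) \<noteq> 2 \<and> ends e \<noteq> {}" if "e \<in> Ed" for e
    using assms that unfolding multigraph_def by auto
  then show "z \<in> s2_verts V Ed ends \<alpha> \<longleftrightarrow>
    z \<in> Orig ` (V - mleaves V Ed ends) \<union> leaf_copies V Ed ends \<alpha> \<union> \<Union>(new_verts ends ` Ed)"
    by (cases z) (auto simp: s2_verts_def leaf_copies_def)
qed

lemma new_verts_in_s2_edges:
  assumes H: "multigraph V Ed ends" and e: "e \<in> Ed"
  shows "new_verts ends e \<in> s2_edges V Ed ends \<alpha>"
proof (cases "card (ends e) = 2")
  case True
  then obtain u v where "ends e = {u, v}" "u \<noteq> v" by (meson card_2_iff)
  then show ?thesis using e by (simp add: new_verts_link s2_edges_def) blast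
next
  case False
  then obtain v where "ends e = {v}" using H e by (metis card_1_singletonE multigraph_def)
  then show ?thesis using e by (auto simp: new_verts_def new_verts_at_def s2_edges_def)
qed

lemma s2_edge_Orig:
  assumes H: "multigraph V Ed ends" and "e \<in> Ed" "v \<in> ends e" "v \<in> V - mleaves V Ed ends"
    and "z \<in> new_verts_at ends e v"
  shows "{Orig v, z} \<in> s2_edges V Ed ends \<alpha>"
  using assms multigraph_non_link_is_loop[OF H] unfolding new_verts_at_def s2_edges_def
  by (auto split: if_splits) blast+

lemma s2_edge_Leafc:
  assumes H: "multigraph V Ed ends" and "e \<in> Ed" "v \<in> ends e" "v \<in> mleaves V Ed ends"
    and "1 \<le> i" "i \<le> \<alpha> v" and "z \<in> new_verts_at ends e v"
  shows "{z, Leafc v i} \<in> s2_edges V Ed ends \<alpha>"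
  using assms edge_at_leaf_is_link[OF H] unfolding new_verts_at_def s2_edges_def by auto

lemma dominating_mono: "E' \<subseteq> E \<Longrightarrow> dominating V E' D \<Longrightarrow> dominating V E D"
  unfolding dominating_def by blast

lemma induced_perfect_matching_mono:
  "E' \<subseteq> E \<Longrightarrow> induced_perfect_matching E' P \<Longrightarrow> induced_perfect_matching E P"
  unfolding induced_perfect_matching_def by (metis subset_trans)

lemma induced_perfect_matchingI:
  "M \<subseteq> E \<Longrightarrow> pairwise disjnt M \<Longrightarrow> induced_perfect_matching E (\<Union>M)"
  unfolding induced_perfect_matching_def pairwise_def disjnt_def by blast

lemma dpdp_mono:
  assumes "E' \<subseteq> E" "dpdp V E'"
  shows "dpdp V E"
proof -
  obtain D P where DP: "D \<inter> P = {}" "D \<union> P = V" "dominating V E' D" "paired_dominating V E' P"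
    using assms(2) unfolding dpdp_def by blast
  have "dominating V E D" "paired_dominating V E P"
    using DP(3,4) dominating_mono[OF assms(1)] induced_perfect_matching_mono[OF assms(1)]
    unfolding paired_dominating_def by blast+
  then show ?thesis using DP(1,2) unfolding dpdp_def by blast
qed

lemma not_minimal_dpdp_if_dpdp_delete_edge:
  assumes "b \<in> E" "dpdp V (E - {b})"
  shows "dpdp V E \<and> \<not> minimal_dpdp V E"
proof -
  have "E - {b} \<subset> E" using assms(1) by blast
  then show ?thesis using assms(2) dpdp_mono unfolding minimal_dpdp_def by blast
qed

locale degree_two_edge =
  fixes V :: "'v set" and Ed :: "'e set" and ends :: "'e \<Rightarrow> 'v set" and \<alpha> :: "'v \<Rightarrow> nat"
    and x y x' y' :: 'v and e1 e2 e3 :: 'e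
  assumes multigraph: "multigraph V Ed ends"
    and no_isolated: "\<forall>v\<in>V. 0 < mdeg Ed ends v"
    and alpha: "\<forall>v\<in>mleaves V Ed ends. 1 \<le> \<alpha> v"
    and deg_x: "mdeg Ed ends x = 2" and deg_y: "mdeg Ed ends y = 2"
    and e1: "e1 \<in> Ed" "ends e1 = {x', x}"
    and e2: "e2 \<in> Ed" "ends e2 = {x, y}"
    and e3: "e3 \<in> Ed" "ends e3 = {y', y}"
    and x'_ne_y: "x' \<noteq> y" and y'_ne_x: "y' \<noteq> x"
    and x'_nbhd: "mnbhd Ed ends x' - {x, y} \<noteq> {}"
    and y'_nbhd: "mnbhd Ed ends y' - {x, y} \<noteq> {}"
begin

abbreviation "NL \<equiv> V - mleaves V Ed ends"

lemma
  shows x'_ne_x: "x' \<noteq> x" and y_ne_x: "y \<noteq> x" and edges_at_x: "{g \<in> Ed. x \<in> ends g} = {e1, e2}"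
    and y'_ne_y: "y' \<noteq> y" and edges_at_y: "{g \<in> Ed. y \<in> ends g} = {e2, e3}"
proof -
  have "ends e2 = {y, x}" using e2 by auto
  then show "x' \<noteq> x" "y \<noteq> x" "{g \<in> Ed. x \<in> ends g} = {e1, e2}"
    using mdeg_eq_2_incident_edges[OF multigraph deg_x e1] e2 x'_ne_y by blast+
  show "y' \<noteq> y" "{g \<in> Ed. y \<in> ends g} = {e2, e3}"
    using mdeg_eq_2_incident_edges[OF multigraph deg_y e2 e3] y'_ne_x by blast+
qed

lemma new_verts_e1: "new_verts ends e1 = {Sub e1 x', Sub e1 x}"
  and new_verts_e2: "new_verts ends e2 = {Sub e2 x, Sub e2 y}"
  and new_verts_e3: "new_verts ends e3 = {Sub e3 y', Sub e3 y}"
  using new_verts_link[of ends e1 x' x] new_verts_link[of ends e2 x y] new_verts_link[of ends e3 y' y]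
    e1 e2 e3 x'_ne_x y_ne_x y'_ne_y by simp_all

lemma e1_ne_e2: "e1 \<noteq> e2" and e1_ne_e3: "e1 \<noteq> e3" and e2_ne_e3: "e2 \<noteq> e3"
  using e1 e2 e3 x'_ne_x x'_ne_y y_ne_x y'_ne_x by (auto simp: doubleton_eq_iff)

lemma edge_at_x_or_y_iff: "g \<in> Ed \<Longrightarrow> x \<in> ends g \<or> y \<in> ends g \<longleftrightarrow> g \<in> {e1, e2, e3}"
  using edges_at_x edges_at_y e1 e2 e3 by blast

lemma off_path_edge_at:
  assumes "w \<in> V" "w \<noteq> x" "w \<noteq> y"
  shows "\<exists>f\<in>Ed - {e1, e2, e3}. w \<in> ends f"
proof (cases "w = x' \<or> w = y'")
  case True
  then have "mnbhd Ed ends w - {x, y} \<noteq> {}" using x'_nbhd y'_nbhd by blast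
  then obtain u f where f: "f \<in> Ed" "ends f = {u, w}" "u \<notin> {x, y}"
    unfolding mnbhd_def by blast
  then have "w \<in> ends f" "x \<notin> ends f" "y \<notin> ends f" using assms by auto
  then show ?thesis using f(1) edge_at_x_or_y_iff by blast
next
  case False
  have "0 < mdeg Ed ends w" using no_isolated assms(1) by blast
  then obtain f where "f \<in> Ed" "w \<in> ends f" using mdeg_pos_imp_edge by metis
  moreover have "w \<notin> ends e" if "e \<in> {e1, e2, e3}" for e
    using that False assms e1 e2 e3 by auto
  ultimately show ?thesis by blast
qed

lemma path_vertices_nonleaves: "x \<in> NL" "y \<in> NL" "x' \<in> NL" "y' \<in> NL"
proof -
  have V: "x \<in> V" "y \<in> V" "x' \<in> V" "y' \<in> V"
    using multigraph e1 e2 e3 unfolding multigraph_def by blast+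
  then show "x \<in> NL" "y \<in> NL" using deg_x deg_y by (auto simp: mleaves_def)
  have "2 \<le> mdeg Ed ends v" if "v \<in> V" "v \<noteq> x" "v \<noteq> y" "e \<in> {e1, e3}" "v \<in> ends e" for v e
    using off_path_edge_at[OF that(1-3)] mdeg_ge_2_if_two_edges[OF multigraph] that e1 e3 by blast
  from this[of x' e1] this[of y' e3] show "x' \<in> NL" "y' \<in> NL"
    using V e1 e3 x'_ne_x x'_ne_y y'_ne_x y'_ne_y by (auto simp: mleaves_def)
qed

lemma path_edges_are_links: "card (ends e1) = 2" "card (ends e2) = 2" "card (ends e3) = 2"
  using e1 e2 e3 x'_ne_x y_ne_x y'_ne_y by auto

definition D :: "('v, 'e) s2v set" where
  "D = Orig ` (NL - {x, y}) \<union> leaf_copies V Ed ends \<alpha> \<union> {Sub e1 x', Sub e2 x, Sub e2 y, Sub e3 y'}"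

definition M :: "('v, 'e) s2v set set" where
  "M = insert {Orig x, Sub e1 x} (insert {Orig y, Sub e3 y} (new_verts ends ` (Ed - {e1, e2, e3})))"

definition P :: "('v, 'e) s2v set" where
  "P = \<Union>M"

abbreviation pruned_edges :: "('v, 'e) s2v set set" where
  "pruned_edges \<equiv> s2_edges V Ed ends \<alpha> - {new_verts ends e2}"

lemma P_eq: "P = \<Union>(new_verts ends ` (Ed - {e1, e2, e3})) \<union> {Orig x, Sub e1 x, Orig y, Sub e3 y}"
  unfolding P_def M_def by blast

lemma D_Int_P: "D \<inter> P = {}"
  using x'_ne_x y'_ne_y e1_ne_e2 e1_ne_e3 e2_ne_e3
  by (auto simp: D_def P_eq leaf_copies_def)

lemma D_Un_P: "D \<union> P = s2_verts V Ed ends \<alpha>"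
proof -
  have new: "\<Union>(new_verts ends ` Ed) =
      \<Union>(new_verts ends ` (Ed - {e1, e2, e3})) \<union> new_verts ends e1 \<union> new_verts ends e2 \<union> new_verts ends e3"
    using e1(1) e2(1) e3(1) by blast
  have orig: "Orig ` NL = Orig ` (NL - {x, y}) \<union> {Orig x, Orig y}"
    using path_vertices_nonleaves(1,2) by auto
  show ?thesis
    unfolding s2_verts_eq[OF multigraph] new orig D_def P_eq new_verts_e1 new_verts_e2 new_verts_e3
    by (simp only: insert_def Un_empty_right Un_ac)
qed

lemma P_cases:
  assumes "z \<in> P"
  obtains (other) f where "f \<in> Ed - {e1, e2, e3}" "z \<in> new_verts ends f"
    | (Orig_x) "z = Orig x" | (Sub_x) "z = Sub e1 x" | (Orig_y) "z = Orig y" | (Sub_y) "z = Sub e3 y"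
  using assms unfolding P_eq by blast

lemma D_cases:
  assumes "z \<in> D"
  obtains (Orig) w where "z = Orig w" "w \<in> NL" "w \<noteq> x" "w \<noteq> y"
    | (Leafc) w i where "z = Leafc w i" "w \<in> mleaves V Ed ends" "1 \<le> i" "i \<le> \<alpha> w"
    | (Sub_x') "z = Sub e1 x'" | (Sub_x) "z = Sub e2 x" | (Sub_y) "z = Sub e2 y" | (Sub_y') "z = Sub e3 y'"
  using assms unfolding D_def leaf_copies_def by auto

lemma Orig_edge_pruned:
  assumes "e \<in> Ed" "v \<in> ends e" "v \<in> NL" "z \<in> new_verts_at ends e v"
  shows "{Orig v, z} \<in> pruned_edges"
proof -
  have "{Orig v, z} \<noteq> new_verts ends e2" by (metis Orig_notin_new_verts insertI1)
  then show ?thesis using s2_edge_Orig[OF multigraph assms] by blast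
qed

lemma Leafc_edge_pruned:
  assumes "e \<in> Ed" "v \<in> ends e" "v \<in> mleaves V Ed ends" "1 \<le> i" "i \<le> \<alpha> v"
    and "z \<in> new_verts_at ends e v"
  shows "{z, Leafc v i} \<in> pruned_edges"
proof -
  have "{z, Leafc v i} \<noteq> new_verts ends e2" by (metis Leafc_notin_new_verts insertI1 insert_commute)
  then show ?thesis using s2_edge_Leafc[where \<alpha> = \<alpha>, OF multigraph assms] by blast
qed

lemma new_verts_pruned:
  assumes "e \<in> Ed" "e \<noteq> e2"
  shows "new_verts ends e \<in> pruned_edges"
proof -
  have "card (ends e) = 1 \<or> card (ends e) = 2" using multigraph assms(1) by (simp add: multigraph_def)
  then have "ends e \<noteq> {}" by auto
  then have "new_verts ends e \<noteq> new_verts ends e2"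
    using new_verts_ne_empty new_verts_disjoint[OF assms(2)] by (metis Int_absorb)
  then show ?thesis using new_verts_in_s2_edges[OF multigraph assms(1)] by blast
qed

lemma induced_perfect_matching_P: "induced_perfect_matching pruned_edges P"
  unfolding P_def
proof (rule induced_perfect_matchingI)
  show "M \<subseteq> pruned_edges"
    using Orig_edge_pruned[OF e1(1), of x "Sub e1 x"] Orig_edge_pruned[OF e3(1), of y "Sub e3 y"]
      new_verts_pruned e1 e3 path_vertices_nonleaves path_edges_are_links by (auto simp: M_def)
  show "pairwise disjnt M"
    using pairwise_disjnt_new_verts y_ne_x e1_ne_e3 by (auto simp: M_def pairwise_insert disjnt_def)
qed

lemma dominating_D: "dominating (s2_verts V Ed ends \<alpha>) pruned_edges D"
  unfolding dominating_def
proof (intro conjI ballI)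
  show "D \<subseteq> s2_verts V Ed ends \<alpha>" using D_Un_P by blast
  fix z assume "z \<in> s2_verts V Ed ends \<alpha> - D"
  then have "z \<in> P" using D_Un_P by blast
  then show "\<exists>u\<in>D. {u, z} \<in> pruned_edges"
  proof (cases rule: P_cases)
    case (other f)
    then obtain w where w: "w \<in> ends f" "z \<in> new_verts_at ends f w" unfolding new_verts_def by blast
    have "w \<in> V" using multigraph other(1) w(1) unfolding multigraph_def by blast
    have "w \<noteq> x" "w \<noteq> y" using edge_at_x_or_y_iff other(1) w(1) by auto
    show ?thesis
    proof (cases "w \<in> mleaves V Ed ends")
      case True
      then have "Leafc w 1 \<in> D" using alpha by (auto simp: D_def leaf_copies_def)
      moreover have "{z, Leafc w 1} \<in> pruned_edges"
        using Leafc_edge_pruned[of f w 1 z] other(1) w True alpha by simp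
      ultimately show ?thesis by (metis insert_commute)
    next
      case False
      then have "Orig w \<in> D" using \<open>w \<in> V\<close> \<open>w \<noteq> x\<close> \<open>w \<noteq> y\<close> by (simp add: D_def)
      moreover have "{Orig w, z} \<in> pruned_edges"
        using Orig_edge_pruned[of f w z] other(1) w False \<open>w \<in> V\<close> by simp
      ultimately show ?thesis by blast
    qed
  next
    case Orig_x
    have "{Orig x, Sub e2 x} \<in> pruned_edges"
      using Orig_edge_pruned e2 path_vertices_nonleaves path_edges_are_links by simp
    then show ?thesis using Orig_x by (intro bexI[of _ "Sub e2 x"]) (auto simp: D_def insert_commute)
  next
    case Orig_y
    have "{Orig y, Sub e2 y} \<in> pruned_edges"
      using Orig_edge_pruned e2 path_vertices_nonleaves path_edges_are_links by simp
    then show ?thesis using Orig_y by (intro bexI[of _ "Sub e2 y"]) (auto simp: D_def insert_commute)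
  next
    case Sub_x
    then show ?thesis
      using new_verts_pruned[OF e1(1) e1_ne_e2] by (intro bexI[of _ "Sub e1 x'"]) (auto simp: D_def new_verts_e1)
  next
    case Sub_y
    then show ?thesis
      using new_verts_pruned[OF e3(1) e2_ne_e3[symmetric]]
      by (intro bexI[of _ "Sub e3 y'"]) (auto simp: D_def new_verts_e3)
  qed
qed

lemma dominating_P: "dominating (s2_verts V Ed ends \<alpha>) pruned_edges P"
  unfolding dominating_def
proof (intro conjI ballI)
  show "P \<subseteq> s2_verts V Ed ends \<alpha>" using D_Un_P by blast
  have near: "\<exists>f\<in>Ed. w \<in> ends f \<and> (\<exists>u\<in>P. u \<in> new_verts_at ends f w)"
    if w: "w \<in> V" "w \<noteq> x" "w \<noteq> y" for w
  proof -
    obtain f where f: "f \<in> Ed - {e1, e2, e3}" "w \<in> ends f" using off_path_edge_at[OF w] by blast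
    obtain u where u: "u \<in> new_verts_at ends f w" using new_verts_at_ne_empty by (metis ex_in_conv)
    then have "u \<in> new_verts ends f" using new_verts_at_subset[where ends = ends, OF f(2)] by blast
    then have "u \<in> P" using f(1) unfolding P_eq by blast
    then show ?thesis using f u by blast
  qed
  fix z assume "z \<in> s2_verts V Ed ends \<alpha> - P"
  then have "z \<in> D" using D_Un_P by blast
  then show "\<exists>u\<in>P. {u, z} \<in> pruned_edges"
  proof (cases rule: D_cases)
    case (Orig w)
    then obtain f u where "f \<in> Ed" "w \<in> ends f" "u \<in> P" "u \<in> new_verts_at ends f w"
      using near by blast
    moreover from calculation have "{Orig w, u} \<in> pruned_edges"
      using Orig(2) by (intro Orig_edge_pruned)
    ultimately show ?thesis using Orig(1) by (metis insert_commute)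
  next
    case (Leafc w i)
    have "w \<in> V" "w \<noteq> x" "w \<noteq> y" using Leafc(2) path_vertices_nonleaves by (auto simp: mleaves_def)
    then obtain f u where "f \<in> Ed" "w \<in> ends f" "u \<in> P" "u \<in> new_verts_at ends f w"
      using near by blast
    moreover from calculation have "{u, Leafc w i} \<in> pruned_edges"
      using Leafc(2-4) by (intro Leafc_edge_pruned)
    ultimately show ?thesis using Leafc(1) by blast
  next
    case Sub_x'
    have "{Sub e1 x, Sub e1 x'} \<in> pruned_edges"
      using new_verts_pruned[OF e1(1) e1_ne_e2] by (simp add: new_verts_e1 insert_commute)
    moreover have "Sub e1 x \<in> P" by (simp add: P_eq)
    ultimately show ?thesis using Sub_x' by blast
  next
    case Sub_x
    have "{Orig x, Sub e2 x} \<in> pruned_edges"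
      using Orig_edge_pruned e2 path_vertices_nonleaves path_edges_are_links by simp
    moreover have "Orig x \<in> P" by (simp add: P_eq)
    ultimately show ?thesis using Sub_x by blast
  next
    case Sub_y
    have "{Orig y, Sub e2 y} \<in> pruned_edges"
      using Orig_edge_pruned e2 path_vertices_nonleaves path_edges_are_links by simp
    moreover have "Orig y \<in> P" by (simp add: P_eq)
    ultimately show ?thesis using Sub_y by blast
  next
    case Sub_y'
    have "{Sub e3 y, Sub e3 y'} \<in> pruned_edges"
      using new_verts_pruned[OF e3(1) e2_ne_e3[symmetric]] by (simp add: new_verts_e3 insert_commute)
    moreover have "Sub e3 y \<in> P" by (simp add: P_eq)
    ultimately show ?thesis using Sub_y' by blast
  qed
qed

lemma dpdp_pruned: "dpdp (s2_verts V Ed ends \<alpha>) pruned_edges"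
  unfolding dpdp_def paired_dominating_def
  using D_Int_P D_Un_P dominating_D dominating_P induced_perfect_matching_P by (intro exI[of _ D] exI[of _ P]) simp

end

theorem proposition4p6:
  fixes V :: "'v set" and Ed :: "'e set" and ends :: "'e \<Rightarrow> 'v set"
    and \<alpha> :: "'v \<Rightarrow> nat" and x y x' y' :: 'v
  assumes H: "multigraph V Ed ends"
    and no_isolated: "\<forall>v\<in>V. mdeg Ed ends v > 0"
    and alpha: "\<forall>v\<in>mleaves V Ed ends. \<alpha> v \<ge> 1"
    and xV: "x \<in> V" and yV: "y \<in> V"
    and adj: "y \<in> mnbhd Ed ends x"
    and degx: "mdeg Ed ends x = 2" and degy: "mdeg Ed ends y = 2"
    and x': "mnbhd Ed ends x - {y} = {x'}"
    and y': "mnbhd Ed ends y - {x} = {y'}"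
    and nex: "mnbhd Ed ends x' - {x, y} \<noteq> {}"
    and ney: "mnbhd Ed ends y' - {x, y} \<noteq> {}"
  shows "dpdp (s2_verts V Ed ends \<alpha>) (s2_edges V Ed ends \<alpha>)
         \<and> \<not> minimal_dpdp (s2_verts V Ed ends \<alpha>) (s2_edges V Ed ends \<alpha>)"
proof -
  have "x' \<in> mnbhd Ed ends x" "x' \<noteq> y" "y' \<in> mnbhd Ed ends y" "y' \<noteq> x"
    using x' y' by blast+
  moreover obtain e1 where "e1 \<in> Ed" "ends e1 = {x', x}"
    using \<open>x' \<in> mnbhd Ed ends x\<close> unfolding mnbhd_def by blast
  moreover obtain e3 where "e3 \<in> Ed" "ends e3 = {y', y}"
    using \<open>y' \<in> mnbhd Ed ends y\<close> unfolding mnbhd_def by blast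
  moreover obtain e2 where e2: "e2 \<in> Ed" "ends e2 = {x, y}"
  proof -
    obtain e where "e \<in> Ed" "ends e = {y, x}" using adj unfolding mnbhd_def by blast
    then show ?thesis using that by (simp add: insert_commute)
  qed
  ultimately interpret degree_two_edge V Ed ends \<alpha> x y x' y' e1 e2 e3
    using H no_isolated alpha degx degy nex ney by unfold_locales simp_all
  show ?thesis
    using not_minimal_dpdp_if_dpdp_delete_edge[OF new_verts_in_s2_edges[OF H e2(1)] dpdp_pruned] .
qed

end
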